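(* Fix a nonempty partition $\lambda$. For $n>|\lambda|+\lambda_1$ let $N(n)$ be the number of standard Young tableaux of shape $\lambda[n]$, and let $G(n)$ be the number of those standard Young tableaux $T[n]$ of shape $\lambda[n]$ (where $T$ is the part below the top row, of shape $\lambda$) such that any two entries of $T$ differ by at least $2$ and $2$ and $n$ are not both entries of $T$. Then $\lim_{n\to\infty} G(n)/N(n)=1$.
   Context: For a partition $\lambda=(\lambda_1\ge\dots\ge\lambda_\ell)$ with $|\lambda|=\lambda_1+\dots+\lambda_\ell$, $\lambda[n]$ is the partition of $n$ obtained by adding a new largest part of size $n-|\lambda|$ (i.e. $(n-|\lambda|,\lambda_1,\dots,\lambda_\ell)$). For a tableau $T$ with distinct positive entries, $T[n]$ denotes the tableau obtained by placing above $T$ a top row consisting of all elements of $\{1,\dots,n\}$ not in $T$, in increasing order. A standard Young tableau with $n$ boxes has entries $1,\dots,n$ increasing along rows and down columns. *)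

theory Defs
  imports Complex_Main
begin

definition is_partition :: "nat list \<Rightarrow> bool" where
  "is_partition lam \<longleftrightarrow> sorted_wrt (\<ge>) lam \<and> (\<forall>x\<in>set lam. 0 < x)"

definition psize :: "nat list \<Rightarrow> nat" where
  "psize lam = sum_list lam"

definition pad :: "nat list \<Rightarrow> nat \<Rightarrow> nat list" where
  "pad lam n = (n - psize lam) # lam"

text \<open>Cells of the Young diagram (row i, column j), 0-indexed, row 0 on top.\<close>
definition diagram :: "nat list \<Rightarrow> (nat \<times> nat) set" where
  "diagram mu = {(i, j). i < length mu \<and> j < mu ! i}"

definition syt :: "nat list \<Rightarrow> (nat \<times> nat \<Rightarrow> nat) set" where
  "syt mu = {T. (\<forall>c. c \<notin> diagram mu \<longrightarrow> T c = 0)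
              \<and> bij_betw T (diagram mu) {1..sum_list mu}
              \<and> (\<forall>i j. (i, Suc j) \<in> diagram mu \<longrightarrow> T (i, j) < T (i, Suc j))
              \<and> (\<forall>i j. (Suc i, j) \<in> diagram mu \<longrightarrow> T (i, j) < T (Suc i, j))}"

definition lower_entries :: "nat list \<Rightarrow> (nat \<times> nat \<Rightarrow> nat) \<Rightarrow> nat set" where
  "lower_entries mu T' = T' ` {c \<in> diagram mu. 1 \<le> fst c}"

definition N_count :: "nat list \<Rightarrow> nat \<Rightarrow> nat" where
  "N_count lam n = card (syt (pad lam n))"

definition G_count :: "nat list \<Rightarrow> nat \<Rightarrow> nat" where
  "G_count lam n = card {T' \<in> syt (pad lam n).
      (\<forall>a\<in>lower_entries (pad lam n) T'. \<forall>b\<in>lower_entries (pad lam n) T'.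
          a \<noteq> b \<longrightarrow> a + 2 \<le> b \<or> b + 2 \<le> a)
    \<and> \<not> (2 \<in> lower_entries (pad lam n) T' \<and> n \<in> lower_entries (pad lam n) T')}"

end

theory Submission
  imports Defs "HOL-Library.FuncSet" "HOL-Library.Product_Lexorder"
begin

text \<open>Write \<open>K = |\<lambda>|\<close>. A standard tableau of shape \<open>\<lambda>[n]\<close> is determined by its entries in
  the \<open>K\<close> cells below the top row, so it is encoded injectively by a map from these cells to
  \<open>{1..n}\<close>. If the tableau is not counted by \<open>G(n)\<close>, two lower entries are consecutive or one of
  them is \<open>n\<close>; each such coincidence determines one value from the others, so there are
  \<open>O(n^(K-1))\<close> such tableaux. Conversely, every \<open>K\<close>-subset of \<open>{K+1..n}\<close>, written into the
  lower cells in reading order with its complement in the top row, gives a standard tableau, so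
  \<open>N(n) \<ge> (n-K choose K) \<ge> (n/2K)^K\<close>. Hence \<open>1 - G(n)/N(n) = O(1/n)\<close>.\<close>

definition top_cells :: "nat list \<Rightarrow> nat \<Rightarrow> (nat \<times> nat) set" where
  "top_cells lam n = {(0, j) | j. j < n - psize lam}"

definition lower_cells :: "nat list \<Rightarrow> (nat \<times> nat) set" where
  "lower_cells lam = {(i, j). 1 \<le> i \<and> i \<le> length lam \<and> j < lam ! (i - 1)}"

lemma diagram_pad: "diagram (pad lam n) = top_cells lam n \<union> lower_cells lam"
  by (auto simp: diagram_def pad_def lower_cells_def top_cells_def nth_Cons' split: if_splits)

lemma top_cells_Int_lower_cells: "top_cells lam n \<inter> lower_cells lam = {}"
  by (auto simp: top_cells_def lower_cells_def)

lemma lower_entries_pad: "lower_entries (pad lam n) T = T ` lower_cells lam"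
proof -
  have "{c \<in> diagram (pad lam n). 1 \<le> fst c} = lower_cells lam"
    by (auto simp: diagram_def pad_def lower_cells_def nth_Cons')
  then show ?thesis by (simp add: lower_entries_def)
qed

lemma lower_cells_eq_image:
  "lower_cells lam = (\<lambda>(i, j). (Suc i, j)) ` (SIGMA i:{..<length lam}. {..<lam ! i})"
  by (force simp: lower_cells_def image_iff intro: bexI[where x = "fst _ - 1"])

lemma finite_lower_cells: "finite (lower_cells lam)"
  by (simp add: lower_cells_eq_image)

lemma card_lower_cells: "card (lower_cells lam) = psize lam"
proof -
  have "inj_on (\<lambda>(i, j). (Suc i, j)) (SIGMA i:{..<length lam}. {..<lam ! i})"
    by (auto simp: inj_on_def)
  then have "card (lower_cells lam) = (\<Sum>i<length lam. lam ! i)"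
    by (simp add: lower_cells_eq_image card_image card_SigmaI)
  also have "\<dots> = psize lam"
    by (simp add: psize_def sum_list_sum_nth lessThan_atLeast0)
  finally show ?thesis .
qed

lemma psize_pos: "is_partition lam \<Longrightarrow> lam \<noteq> [] \<Longrightarrow> 0 < psize lam"
  by (cases lam) (auto simp: is_partition_def psize_def)

lemma lower_cells_col_lt_psize:
  assumes "(i, j) \<in> lower_cells lam"
  shows "j < psize lam"
proof -
  have "i - 1 < length lam" "j < lam ! (i - 1)"
    using assms by (auto simp: lower_cells_def)
  then show ?thesis
    by (metis elem_le_sum_list order.strict_trans2 psize_def)
qed

lemma sum_list_pad: "psize lam \<le> n \<Longrightarrow> sum_list (pad lam n) = n"
  by (simp add: pad_def psize_def)

lemma bij_betw_syt_pad:
  assumes "T \<in> syt (pad lam n)" "psize lam \<le> n"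
  shows "bij_betw T (top_cells lam n \<union> lower_cells lam) {1..n}"
  using assms by (simp add: syt_def diagram_pad sum_list_pad)

lemma syt_pad_lower_image:
  "T \<in> syt (pad lam n) \<Longrightarrow> psize lam \<le> n \<Longrightarrow> T ` lower_cells lam \<subseteq> {1..n}"
  by (metis bij_betw_syt_pad bij_betw_imp_surj_on image_mono sup_ge2)

lemma syt_pad_top_image:
  assumes "T \<in> syt (pad lam n)" "psize lam \<le> n"
  shows "T ` top_cells lam n = {1..n} - T ` lower_cells lam"
proof -
  have bij: "bij_betw T (top_cells lam n \<union> lower_cells lam) {1..n}"
    using assms by (rule bij_betw_syt_pad)
  then have "T ` top_cells lam n \<union> T ` lower_cells lam = {1..n}"
    by (auto simp: bij_betw_def)
  moreover have "T ` top_cells lam n \<inter> T ` lower_cells lam = {}"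
    using bij top_cells_Int_lower_cells[of lam n] unfolding bij_betw_def
    by (metis image_empty inj_on_image_Int sup_ge1 sup_ge2)
  ultimately show ?thesis by blast
qed

lemma syt_pad_top_row_sorted:
  assumes "T \<in> syt (pad lam n)"
  shows "sorted_wrt (<) (map (\<lambda>j. T (0, j)) [0..<n - psize lam])"
proof -
  have "T (0, j) < T (0, Suc j)" if "Suc j < n - psize lam" for j
    using assms that by (simp add: syt_def diagram_def pad_def)
  then show ?thesis
    by (simp add: sorted_wrt_iff_nth_Suc_transp)
qed

lemma syt_outside_diagram: "T \<in> syt mu \<Longrightarrow> c \<notin> diagram mu \<Longrightarrow> T c = 0"
  unfolding syt_def by blast

lemma syt_pad_eqI:
  assumes T1: "T1 \<in> syt (pad lam n)" and T2: "T2 \<in> syt (pad lam n)" and "psize lam \<le> n"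
    and eq: "\<And>c. c \<in> lower_cells lam \<Longrightarrow> T1 c = T2 c"
  shows "T1 = T2"
proof
  fix c
  let ?row = "\<lambda>T. map (\<lambda>j. T (0, j)) [0..<n - psize lam]"
  have "set (?row T) = T ` top_cells lam n" for T :: "nat \<times> nat \<Rightarrow> nat"
    by (auto simp: top_cells_def)
  moreover have "T1 ` lower_cells lam = T2 ` lower_cells lam"
    using eq by (auto simp: image_iff)
  ultimately have "set (?row T1) = set (?row T2)"
    using syt_pad_top_image[OF T1 \<open>psize lam \<le> n\<close>] syt_pad_top_image[OF T2 \<open>psize lam \<le> n\<close>] by simp
  then have "?row T1 = ?row T2"
    using syt_pad_top_row_sorted[OF T1] syt_pad_top_row_sorted[OF T2]
    by (intro sorted_distinct_set_unique) (auto simp: strict_sorted_iff)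
  then have "T1 c = T2 c" if "c \<in> top_cells lam n"
    using that by (auto simp: top_cells_def list_eq_iff_nth_eq)
  moreover have "T1 c = T2 c" if "c \<notin> diagram (pad lam n)"
    using T1 T2 that by (metis syt_outside_diagram)
  ultimately show "T1 c = T2 c"
    using eq by (metis UnE diagram_pad)
qed

lemma inj_on_restrict_syt_pad:
  assumes "psize lam \<le> n"
  shows "inj_on (\<lambda>T. restrict T (lower_cells lam)) (syt (pad lam n))"
proof (rule inj_onI)
  fix T1 T2
  assume "T1 \<in> syt (pad lam n)" "T2 \<in> syt (pad lam n)"
    and "restrict T1 (lower_cells lam) = restrict T2 (lower_cells lam)"
  moreover from this(3) have "T1 c = T2 c" if "c \<in> lower_cells lam" for c
    using that by (metis restrict_apply')
  ultimately show "T1 = T2"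
    using \<open>psize lam \<le> n\<close> by (intro syt_pad_eqI)
qed

lemma restrict_syt_pad_PiE:
  "T \<in> syt (pad lam n) \<Longrightarrow> psize lam \<le> n \<Longrightarrow>
    restrict T (lower_cells lam) \<in> lower_cells lam \<rightarrow>\<^sub>E {1..n}"
  using syt_pad_lower_image by fastforce

lemma finite_syt_pad:
  assumes "psize lam \<le> n"
  shows "finite (syt (pad lam n))"
proof (rule inj_on_finite[OF inj_on_restrict_syt_pad[OF assms]])
  show "(\<lambda>T. restrict T (lower_cells lam)) ` syt (pad lam n) \<subseteq> lower_cells lam \<rightarrow>\<^sub>E {1..n}"
    using restrict_syt_pad_PiE assms by blast
  show "finite (lower_cells lam \<rightarrow>\<^sub>E {1..n})"
    by (simp add: finite_PiE finite_lower_cells)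
qed

lemma card_PiE_determined_le:
  assumes "finite D" "finite A" "c \<in> D" "P \<subseteq> D \<rightarrow>\<^sub>E A"
    and det: "\<And>f g. f \<in> P \<Longrightarrow> g \<in> P \<Longrightarrow> (\<forall>x\<in>D - {c}. f x = g x) \<Longrightarrow> f c = g c"
  shows "card P \<le> card A ^ (card D - 1)"
proof -
  have "inj_on (\<lambda>f. restrict f (D - {c})) P"
  proof (rule inj_onI)
    fix f g
    assume "f \<in> P" "g \<in> P" and "restrict f (D - {c}) = restrict g (D - {c})"
    then have agree: "\<forall>x\<in>D - {c}. f x = g x"
      by (metis restrict_apply')
    show "f = g"
    proof
      fix x
      show "f x = g x"
      proof (cases "x \<in> D")
        case True
        then show ?thesis
          using agree det[OF \<open>f \<in> P\<close> \<open>g \<in> P\<close> agree] by (cases "x = c") auto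
      next
        case False
        then show ?thesis
          using \<open>f \<in> P\<close> \<open>g \<in> P\<close> assms(4) by (metis PiE_arb subsetD)
      qed
    qed
  qed
  moreover have "(\<lambda>f. restrict f (D - {c})) ` P \<subseteq> (D - {c}) \<rightarrow>\<^sub>E A"
    using assms(4) by (force simp: PiE_iff)
  ultimately have "card P \<le> card ((D - {c}) \<rightarrow>\<^sub>E A)"
    by (intro card_inj_on_le) (simp_all add: assms finite_PiE)
  also have "\<dots> = card A ^ (card D - 1)"
    using assms by (simp add: card_PiE)
  finally show ?thesis .
qed

lemma card_UN_le_uniform:
  assumes "finite I" "\<And>i. i \<in> I \<Longrightarrow> card (A i) \<le> b"
  shows "card (\<Union>i\<in>I. A i) \<le> card I * b"
proof -
  have "card (\<Union>i\<in>I. A i) \<le> (\<Sum>i\<in>I. card (A i))"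
    using assms(1) by (rule card_UN_le)
  also have "\<dots> \<le> card I * b"
    using sum_mono[of I "\<lambda>i. card (A i)" "\<lambda>_. b"] assms(2) by simp
  finally show ?thesis .
qed

definition crowded_maps :: "'a set \<Rightarrow> nat \<Rightarrow> ('a \<Rightarrow> nat) set" where
  "crowded_maps D n = {f \<in> D \<rightarrow>\<^sub>E {1..n}.
     (\<exists>c\<in>D. \<exists>c'\<in>D - {c}. f c' = f c + 1) \<or> (\<exists>c\<in>D. f c = n)}"

lemma card_crowded_maps_le:
  assumes "finite D"
  shows "card (crowded_maps D n) \<le> (card D * card D + card D) * n ^ (card D - 1)"
proof -
  let ?P = "D \<rightarrow>\<^sub>E {1..n}" and ?b = "n ^ (card D - 1)"
  let ?adjacent = "\<Union>c\<in>D. \<Union>c'\<in>D - {c}. {f \<in> ?P. f c' = f c + 1}"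
  let ?maximal = "\<Union>c\<in>D. {f \<in> ?P. f c = n}"
  have adjacent: "card {f \<in> ?P. f c' = f c + 1} \<le> ?b" if "c \<in> D" "c' \<in> D - {c}" for c c'
    using card_PiE_determined_le[OF assms, of "{1..n}" c' "{f \<in> ?P. f c' = f c + 1}"] that by auto
  have maximal: "card {f \<in> ?P. f c = n} \<le> ?b" if "c \<in> D" for c
    using card_PiE_determined_le[OF assms, of "{1..n}" c "{f \<in> ?P. f c = n}"] that by auto
  have "card (\<Union>c'\<in>D - {c}. {f \<in> ?P. f c' = f c + 1}) \<le> card (D - {c}) * ?b" if "c \<in> D" for c
    using assms adjacent[OF that] by (intro card_UN_le_uniform) auto
  then have "card (\<Union>c'\<in>D - {c}. {f \<in> ?P. f c' = f c + 1}) \<le> card D * ?b" if "c \<in> D" for c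
    using that card_Diff1_le[of D c] by (meson le_trans mult_le_mono1)
  then have "card ?adjacent \<le> card D * (card D * ?b)"
    using assms by (intro card_UN_le_uniform)
  moreover have "card ?maximal \<le> card D * ?b"
    using assms maximal by (intro card_UN_le_uniform)
  moreover have "crowded_maps D n = ?adjacent \<union> ?maximal"
    by (auto simp: crowded_maps_def)
  ultimately show ?thesis
    using card_Un_le[of ?adjacent ?maximal] by (simp add: algebra_simps)
qed

definition sparse_tableau :: "nat list \<Rightarrow> nat \<Rightarrow> (nat \<times> nat \<Rightarrow> nat) \<Rightarrow> bool" where
  "sparse_tableau lam n T \<longleftrightarrow>
     (\<forall>a\<in>lower_entries (pad lam n) T. \<forall>b\<in>lower_entries (pad lam n) T.
        a \<noteq> b \<longrightarrow> a + 2 \<le> b \<or> b + 2 \<le> a)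
     \<and> \<not> (2 \<in> lower_entries (pad lam n) T \<and> n \<in> lower_entries (pad lam n) T)"

lemma G_count_eq: "G_count lam n = card {T \<in> syt (pad lam n). sparse_tableau lam n T}"
  by (simp add: G_count_def sparse_tableau_def)

lemma restrict_not_sparse_crowded:
  assumes "T \<in> syt (pad lam n)" "psize lam \<le> n" "\<not> sparse_tableau lam n T"
  shows "restrict T (lower_cells lam) \<in> crowded_maps (lower_cells lam) n"
proof -
  let ?L = "lower_cells lam"
  have "(\<exists>c\<in>?L. \<exists>c'\<in>?L - {c}. T c' = T c + 1) \<or> (\<exists>c\<in>?L. T c = n)"
  proof (rule ccontr)
    assume not_crowded: "\<not> ?thesis"
    have "a + 2 \<le> b \<or> b + 2 \<le> a" if a: "a \<in> T ` ?L" and b: "b \<in> T ` ?L" and "a \<noteq> b" for a b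
    proof -
      obtain c c' where "c \<in> ?L" "c' \<in> ?L" "a = T c" "b = T c'"
        using a b by blast
      with not_crowded \<open>a \<noteq> b\<close> have "b \<noteq> a + 1" "a \<noteq> b + 1"
        by auto
      with \<open>a \<noteq> b\<close> show ?thesis
        by linarith
    qed
    with not_crowded assms(3) show False
      by (auto simp: sparse_tableau_def lower_entries_pad)
  qed
  then show ?thesis
    using restrict_syt_pad_PiE[OF assms(1,2)] by (auto simp: crowded_maps_def)
qed

lemma card_not_sparse_le:
  assumes "psize lam \<le> n"
  shows "card {T \<in> syt (pad lam n). \<not> sparse_tableau lam n T}
           \<le> (psize lam * psize lam + psize lam) * n ^ (psize lam - 1)"
proof -
  let ?L = "lower_cells lam"
  have "card {T \<in> syt (pad lam n). \<not> sparse_tableau lam n T} \<le> card (crowded_maps ?L n)"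
  proof (rule card_inj_on_le)
    show "inj_on (\<lambda>T. restrict T ?L) {T \<in> syt (pad lam n). \<not> sparse_tableau lam n T}"
      using inj_on_restrict_syt_pad[OF assms] by (rule inj_on_subset) auto
    show "(\<lambda>T. restrict T ?L) ` {T \<in> syt (pad lam n). \<not> sparse_tableau lam n T}
            \<subseteq> crowded_maps ?L n"
      using restrict_not_sparse_crowded assms by blast
    show "finite (crowded_maps ?L n)"
      by (rule finite_subset[of _ "?L \<rightarrow>\<^sub>E {1..n}"])
         (auto simp: crowded_maps_def finite_PiE finite_lower_cells)
  qed
  also have "\<dots> \<le> (psize lam * psize lam + psize lam) * n ^ (psize lam - 1)"
    using card_crowded_maps_le[OF finite_lower_cells] by (simp add: card_lower_cells)
  finally show ?thesis .
qed

lemma N_count_eq: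
  assumes "psize lam \<le> n"
  shows "N_count lam n = G_count lam n + card {T \<in> syt (pad lam n). \<not> sparse_tableau lam n T}"
  unfolding N_count_def G_count_eq
  by (subst card_Un_disjoint[symmetric])
     (auto intro: arg_cong[where f = card] simp: finite_syt_pad assms)

definition rank :: "'a::linorder set \<Rightarrow> 'a \<Rightarrow> nat" where
  "rank D x = card {y \<in> D. y < x}"

lemma rank_strict_mono:
  "finite D \<Longrightarrow> x \<in> D \<Longrightarrow> x < y \<Longrightarrow> rank D x < rank D y"
  unfolding rank_def by (rule psubset_card_mono) auto

lemma bij_betw_rank:
  assumes "finite D"
  shows "bij_betw (rank D) D {..<card D}"
proof -
  have inj: "inj_on (rank D) D"
    by (rule inj_onI, rule ccontr)
       (metis assms linorder_neqE less_irrefl rank_strict_mono)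
  moreover have "rank D ` D \<subseteq> {..<card D}"
    using assms by (auto simp: rank_def intro!: psubset_card_mono)
  ultimately have "rank D ` D = {..<card D}"
    by (intro card_subset_eq) (simp_all add: card_image)
  with inj show ?thesis
    by (simp add: bij_betw_def)
qed

lemma sorted_nth_le_if_initial_segment:
  fixes ys :: "nat list"
  assumes ys: "sorted_wrt (<) ys" and "{1..k} \<subseteq> set ys" "j < k" "j < length ys"
  shows "ys ! j \<le> k"
proof (rule ccontr)
  assume big: "\<not> ys ! j \<le> k"
  have "{1..k} \<subseteq> (!) ys ` {..<j}"
  proof
    fix x assume x: "x \<in> {1..k}"
    then have "x \<in> set ys"
      using assms(2) by blast
    then obtain i where i: "i < length ys" "ys ! i = x"
      by (metis in_set_conv_nth)
    have "i < j"
    proof (rule ccontr)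
      assume "\<not> i < j"
      then have "ys ! j \<le> ys ! i"
        using sorted_wrt_nth_less[OF ys, of j i] i(1) by (cases "j = i") auto
      then show False
        using big x i(2) by simp
    qed
    then show "x \<in> (!) ys ` {..<j}"
      using i by auto
  qed
  then have "k \<le> card ((!) ys ` {..<j})"
    using card_mono[of "(!) ys ` {..<j}" "{1..k}"] by simp
  also have "\<dots> \<le> j"
    using card_image_le[of "{..<j}" "(!) ys"] by simp
  finally show False
    using \<open>j < k\<close> by simp
qed

text \<open>The lexicographic order on cells is the row reading order, so ranking the lower cells
  in it and filling them with \<open>S\<close> increases along rows and down columns.\<close>
definition tableau_of_set :: "nat list \<Rightarrow> nat \<Rightarrow> nat set \<Rightarrow> nat \<times> nat \<Rightarrow> nat" where
  "tableau_of_set lam n S c =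
     (if c \<in> top_cells lam n then sorted_list_of_set ({1..n} - S) ! snd c
      else if c \<in> lower_cells lam then sorted_list_of_set S ! rank (lower_cells lam) c
      else 0)"

lemma tableau_of_set_lower:
  "c \<in> lower_cells lam \<Longrightarrow> tableau_of_set lam n S c = sorted_list_of_set S ! rank (lower_cells lam) c"
  using top_cells_Int_lower_cells by (auto simp: tableau_of_set_def)

lemma tableau_of_set_outside:
  "c \<notin> diagram (pad lam n) \<Longrightarrow> tableau_of_set lam n S c = 0"
  by (simp add: tableau_of_set_def diagram_pad)

lemma bij_betw_tableau_of_set_lower:
  assumes "finite S" "card S = psize lam"
  shows "bij_betw (tableau_of_set lam n S) (lower_cells lam) S"
proof -
  have "bij_betw ((!) (sorted_list_of_set S) \<circ> rank (lower_cells lam)) (lower_cells lam) S"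
    by (rule bij_betw_trans[OF bij_betw_rank[OF finite_lower_cells] bij_betw_nth])
       (simp_all add: assms card_lower_cells)
  then show ?thesis
    by (rule bij_betw_cong[THEN iffD1, rotated]) (simp add: tableau_of_set_lower)
qed

lemma bij_betw_tableau_of_set_top:
  assumes "S \<subseteq> {1..n}" "card S = psize lam"
  shows "bij_betw (tableau_of_set lam n S) (top_cells lam n) ({1..n} - S)"
proof -
  have S: "finite S" using assms(1) finite_subset by blast
  have "bij_betw snd (top_cells lam n) {..<n - psize lam}"
    by (auto simp: bij_betw_def inj_on_def top_cells_def image_iff)
  moreover have "bij_betw ((!) (sorted_list_of_set ({1..n} - S))) {..<n - psize lam} ({1..n} - S)"
    using assms S by (intro bij_betw_nth) (simp_all add: card_Diff_subset)
  ultimately have "bij_betw ((!) (sorted_list_of_set ({1..n} - S)) \<circ> snd) (top_cells lam n) ({1..n} - S)"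
    by (rule bij_betw_trans)
  then show ?thesis
    by (rule bij_betw_cong[THEN iffD1, rotated]) (simp add: tableau_of_set_def)
qed

lemma tableau_of_set_lower_less:
  assumes "finite S" "card S = psize lam" "c \<in> lower_cells lam" "d \<in> lower_cells lam" "c < d"
  shows "tableau_of_set lam n S c < tableau_of_set lam n S d"
proof -
  have "rank (lower_cells lam) d < psize lam"
    using bij_betw_rank[OF finite_lower_cells, of lam] assms(4)
    by (auto simp: bij_betw_def card_lower_cells)
  then show ?thesis
    using assms rank_strict_mono[OF finite_lower_cells assms(3,5)]
    by (simp add: tableau_of_set_lower sorted_wrt_nth_less)
qed

lemma tableau_of_set_top_less:
  assumes "S \<subseteq> {1..n}" "card S = psize lam" "(0, j') \<in> top_cells lam n" "j < j'"
  shows "tableau_of_set lam n S (0, j) < tableau_of_set lam n S (0, j')"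
  using assms finite_subset[OF assms(1)]
  by (auto simp: tableau_of_set_def top_cells_def card_Diff_subset sorted_wrt_nth_less)

lemma tableau_of_set_top_le:
  assumes "S \<subseteq> {psize lam + 1..n}" "card S = psize lam" "psize lam \<le> n"
    and "(0, j) \<in> top_cells lam n" "j < psize lam"
  shows "tableau_of_set lam n S (0, j) \<le> psize lam"
proof -
  let ?ys = "sorted_list_of_set ({1..n} - S)"
  have "finite S" "S \<subseteq> {1..n}"
    using assms(1) finite_subset by auto
  then have "{1..psize lam} \<subseteq> set ?ys" "j < length ?ys"
    using assms by (auto simp: top_cells_def card_Diff_subset)
  then show ?thesis
    using assms sorted_nth_le_if_initial_segment[of ?ys] by (simp add: tableau_of_set_def)
qed

lemma tableau_of_set_syt:
  assumes "2 * psize lam \<le> n" and S: "S \<subseteq> {psize lam + 1..n}" "card S = psize lam"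
  shows "tableau_of_set lam n S \<in> syt (pad lam n)"
proof -
  let ?T = "tableau_of_set lam n S" and ?K = "psize lam"
  have fin: "finite S" and S1n: "S \<subseteq> {1..n}"
    using S(1) finite_subset by auto
  have lower_gt: "?K < ?T c" if "c \<in> lower_cells lam" for c
    using bij_betw_apply[OF bij_betw_tableau_of_set_lower[OF fin S(2), where n = n] that] S(1)
    by auto
  have "bij_betw ?T (top_cells lam n \<union> lower_cells lam) (({1..n} - S) \<union> S)"
    using bij_betw_tableau_of_set_top[OF S1n S(2)] bij_betw_tableau_of_set_lower[OF fin S(2)]
    by (rule bij_betw_combine) auto
  then have "bij_betw ?T (diagram (pad lam n)) {1..sum_list (pad lam n)}"
    using S1n assms(1) by (simp add: diagram_pad Un_absorb2 sum_list_pad)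
  moreover have "?T (i, j) < ?T (i, Suc j)" if "(i, Suc j) \<in> diagram (pad lam n)" for i j
  proof (cases "(i, Suc j) \<in> top_cells lam n")
    case True
    then show ?thesis
      using tableau_of_set_top_less[OF S1n S(2)] by (auto simp: top_cells_def)
  next
    case False
    then have "(i, j) \<in> lower_cells lam" "(i, Suc j) \<in> lower_cells lam"
      using that by (auto simp: diagram_pad lower_cells_def)
    then show ?thesis
      using tableau_of_set_lower_less[OF fin S(2)] by simp
  qed
  moreover have "?T (i, j) < ?T (Suc i, j)" if "(Suc i, j) \<in> diagram (pad lam n)" for i j
  proof -
    have low: "(Suc i, j) \<in> lower_cells lam"
      using that by (auto simp: diagram_pad top_cells_def)
    consider "(i, j) \<notin> diagram (pad lam n)" | "(i, j) \<in> top_cells lam n"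
      | "(i, j) \<in> lower_cells lam" by (auto simp: diagram_pad)
    then show ?thesis
    proof cases
      case 1
      then show ?thesis
        using lower_gt[OF low] by (simp add: tableau_of_set_outside)
    next
      case 2
      then have "?T (i, j) \<le> ?K"
        using tableau_of_set_top_le[OF S] lower_cells_col_lt_psize[OF low] assms(1)
        by (auto simp: top_cells_def)
      then show ?thesis
        using lower_gt[OF low] by simp
    qed (use low tableau_of_set_lower_less[OF fin S(2)] in auto)
  qed
  ultimately show ?thesis
    unfolding syt_def using tableau_of_set_outside by blast
qed

lemma N_count_ge_binomial:
  assumes "2 * psize lam \<le> n"
  shows "(n - psize lam) choose psize lam \<le> N_count lam n"
proof -
  let ?K = "psize lam"
  let ?F = "{S. S \<subseteq> {?K + 1..n} \<and> card S = ?K}"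
  have "S = tableau_of_set lam n S ` lower_cells lam" if "S \<in> ?F" for S
    using that bij_betw_tableau_of_set_lower[of S lam n] finite_subset
    by (auto simp: bij_betw_def)
  then have "inj_on (tableau_of_set lam n) ?F"
    by (metis (no_types, lifting) inj_onI)
  moreover have "tableau_of_set lam n ` ?F \<subseteq> syt (pad lam n)"
    using tableau_of_set_syt[OF assms] by blast
  ultimately have "card ?F \<le> N_count lam n"
    unfolding N_count_def using assms by (intro card_inj_on_le finite_syt_pad) auto
  then show ?thesis
    by (simp add: n_subsets)
qed

lemma binomial_ge_pow_over_twice:
  assumes "0 < k" "2 * k \<le> n"
  shows "(real n / real (2 * k)) ^ k \<le> real ((n - k) choose k)"
proof -
  have "real n / real (2 * k) \<le> real (n - k) / real k"
    using assms by (simp add: field_simps)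
  then have "(real n / real (2 * k)) ^ k \<le> (real (n - k) / real k) ^ k"
    by (rule power_mono) simp
  also have "\<dots> \<le> real ((n - k) choose k)"
    using assms by (intro binomial_ge_n_over_k_pow_k) simp
  finally show ?thesis .
qed

lemma quotient_le_const_over:
  fixes B N M x :: real and k :: nat
  assumes "0 < x" "0 < k" "0 \<le> B" "B \<le> M * x ^ (k - 1)" "(x / (2 * real k)) ^ k \<le> N"
  shows "B / N \<le> M * (2 * real k) ^ k / x"
proof -
  have "B / N \<le> M * x ^ (k - 1) / (x / (2 * real k)) ^ k"
    using assms by (intro frac_le) auto
  also have "\<dots> = M * (2 * real k) ^ k / x"
    using assms by (cases k) (simp_all add: power_divide field_simps)
  finally show ?thesis .
qed

lemma sparse_fraction_bounds:
  assumes "0 < psize lam" "2 * psize lam < n"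
  defines "K \<equiv> psize lam"
  shows "1 - real ((K * K + K) * (2 * K) ^ K) / n \<le> real (G_count lam n) / real (N_count lam n)"
    and "real (G_count lam n) / real (N_count lam n) \<le> 1"
proof -
  let ?B = "card {T \<in> syt (pad lam n). \<not> sparse_tableau lam n T}"
  have split: "N_count lam n = G_count lam n + ?B"
    using assms by (intro N_count_eq) simp
  have N: "(real n / (2 * K)) ^ K \<le> real (N_count lam n)"
    using binomial_ge_pow_over_twice[of K n] N_count_ge_binomial[of lam n] assms by simp
  moreover have "0 < (real n / (2 * K)) ^ K"
    using assms by simp
  ultimately have N_pos: "0 < real (N_count lam n)"
    by linarith
  have "?B \<le> (K * K + K) * n ^ (K - 1)"
    using card_not_sparse_le[of lam n] assms by simp
  then have B: "real ?B \<le> real (K * K + K) * real n ^ (K - 1)"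
    by (metis of_nat_le_iff of_nat_mult of_nat_power)
  have "real ?B / real (N_count lam n) \<le> real (K * K + K) * (2 * real K) ^ K / n"
    by (rule quotient_le_const_over[OF _ _ _ B]) (use assms N in simp_all)
  then have "real ?B / real (N_count lam n) \<le> real ((K * K + K) * (2 * K) ^ K) / n"
    by simp
  moreover have "real (G_count lam n) / real (N_count lam n) = 1 - real ?B / real (N_count lam n)"
    using split N_pos by (simp add: field_simps)
  moreover have "0 \<le> real ?B / real (N_count lam n)"
    using N_pos by simp
  ultimately show
    "1 - real ((K * K + K) * (2 * K) ^ K) / n \<le> real (G_count lam n) / real (N_count lam n)"
    "real (G_count lam n) / real (N_count lam n) \<le> 1"
    by linarith+
qed

theorem theorem3p2:
  fixes lam :: "nat list"
  assumes "is_partition lam" and "lam \<noteq> []"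
  shows "(\<lambda>n. real (G_count lam n) / real (N_count lam n)) \<longlonglongrightarrow> 1"
proof (rule tendsto_sandwich)
  define K where "K = psize lam"
  define C where "C = real ((K * K + K) * (2 * K) ^ K)"
  have K: "0 < psize lam"
    using assms by (rule psize_pos)
  show "\<forall>\<^sub>F n in sequentially. 1 - C / real n \<le> real (G_count lam n) / real (N_count lam n)"
    "\<forall>\<^sub>F n in sequentially. real (G_count lam n) / real (N_count lam n) \<le> 1"
    using sparse_fraction_bounds[OF K] unfolding eventually_sequentially C_def K_def
    by (meson Suc_le_lessD)+
  show "(\<lambda>n. 1 - C / real n) \<longlonglongrightarrow> 1"
    using tendsto_diff[OF tendsto_const lim_const_over_n[of C]] by simp
qed simp

end
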